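(* Let $X$ be a countable set. (i) If $\mathcal{A}\subseteq\mathcal{P}_\infty(X)$ is hereditary and $\mathcal{A}^\perp$ is bisequential, then $\mathcal{A}$ is an M-family. (ii) If $\mathcal{I}$ is a bisequential ideal on $X$, then $\mathcal{I}^\perp$ is an M-family.
   Context: $\mathcal{P}_\infty(X)$: infinite subsets of $X$. Hereditary: closed under infinite subsets. An ideal on $X$ is a hereditary family of infinite subsets of $X$ closed under finite unions. $\mathcal{A}^\perp=\{B\in\mathcal{P}_\infty(X):B\cap A\text{ finite }\forall A\in\mathcal{A}\}$. An M-family is a hereditary family $\mathcal{A}$ such that for every sequence $(A_n)_n$ in $\mathcal{A}$ there is $A\in\mathcal{A}$ with $A\setminus\bigcup_{i\ge n}A_i$ finite for every $n$. For an ultrafilter $p$ on $X$, $p^*=\{X\setminus A:A\in p\}$. An ideal $\mathcal{I}$ is bisequential if for every ultrafilter $p$ on $X$ with $\mathcal{I}\subseteq p^*$ there is a sequence $(B_n)_n$ in $p^*$ such that every $L\in\mathcal{I}$ satisfies $L\setminus B_n$ finite for some $n$. *)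

theory Defs
  imports Main "HOL-Library.Countable_Set"
begin

definition Pinf :: "'a set \<Rightarrow> 'a set set" where
  "Pinf X = {A. A \<subseteq> X \<and> infinite A}"

definition hereditary :: "'a set \<Rightarrow> 'a set set \<Rightarrow> bool" where
  "hereditary X \<A> \<longleftrightarrow> \<A> \<subseteq> Pinf X \<and>
     (\<forall>B\<in>\<A>. \<forall>C. C \<subseteq> B \<and> infinite C \<longrightarrow> C \<in> \<A>)"

definition ideal_on :: "'a set \<Rightarrow> 'a set set \<Rightarrow> bool" where
  "ideal_on X \<I> \<longleftrightarrow> hereditary X \<I> \<and> (\<forall>A\<in>\<I>. \<forall>B\<in>\<I>. A \<union> B \<in> \<I>)"

definition perp :: "'a set \<Rightarrow> 'a set set \<Rightarrow> 'a set set" where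
  "perp X \<A> = {B \<in> Pinf X. \<forall>A\<in>\<A>. finite (B \<inter> A)}"

definition M_family :: "'a set \<Rightarrow> 'a set set \<Rightarrow> bool" where
  "M_family X \<A> \<longleftrightarrow> hereditary X \<A> \<and>
     (\<forall>An :: nat \<Rightarrow> 'a set. (\<forall>n. An n \<in> \<A>) \<longrightarrow>
        (\<exists>A\<in>\<A>. \<forall>n. finite (A - (\<Union>i\<in>{n..}. An i))))"

definition ultrafilter_on :: "'a set \<Rightarrow> 'a set set \<Rightarrow> bool" where
  "ultrafilter_on X p \<longleftrightarrow> p \<subseteq> Pow X \<and> X \<in> p \<and> {} \<notin> p \<and>
     (\<forall>A\<in>p. \<forall>B. A \<subseteq> B \<and> B \<subseteq> X \<longrightarrow> B \<in> p) \<and>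
     (\<forall>A\<in>p. \<forall>B\<in>p. A \<inter> B \<in> p) \<and>
     (\<forall>A. A \<subseteq> X \<longrightarrow> A \<in> p \<or> X - A \<in> p)"

definition dual_ideal :: "'a set \<Rightarrow> 'a set set \<Rightarrow> 'a set set" where
  "dual_ideal X p = {X - A | A. A \<in> p}"

definition bisequential :: "'a set \<Rightarrow> 'a set set \<Rightarrow> bool" where
  "bisequential X \<I> \<longleftrightarrow>
     (\<forall>p. ultrafilter_on X p \<and> \<I> \<subseteq> dual_ideal X p \<longrightarrow>
        (\<exists>B :: nat \<Rightarrow> 'a set. (\<forall>n. B n \<in> dual_ideal X p) \<and>
            (\<forall>L\<in>\<I>. \<exists>n. finite (L - B n))))"

end

theory Submission
  imports Defs
begin

(* Proof of Proposition 6.  Both parts are instances of one diagonal construction.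
   Let (A n) be a sequence of infinite subsets of the countable set X, all taken from a
   family \<A>, and let T n be the tail union of the A i with i >= n.  The sets T n together with
   the complements of all sets that are almost disjoint from every member of \<A> have the finite
   intersection property, so (Zorn) they lie in a free ultrafilter p on X.  If a family \<I> of such
   almost disjoint sets is bisequential, its defining property applied to p yields P n \<in> p with
   every L \<in> \<I> almost disjoint from some P n.  A countable pseudo-intersection C of the sets
   T n \<inter> P n is then an infinite set almost contained in every tail and almost disjoint from
   every L \<in> \<I>.  For (i) take \<I> = perp X \<A>: since C is not in perp X \<A>, it meets some
   A' \<in> \<A> in an infinite set C \<inter> A' \<in> \<A>, which witnesses the M-family property.  For (ii) take
   \<A> = perp X \<I>: then C itself lies in perp X \<I>. *)

definition filter_on :: "'a set \<Rightarrow> 'a set set \<Rightarrow> bool" where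
  "filter_on X q \<longleftrightarrow> q \<subseteq> Pow X \<and> X \<in> q \<and> {} \<notin> q \<and>
     (\<forall>a\<in>q. \<forall>b\<in>q. a \<inter> b \<in> q) \<and> (\<forall>a\<in>q. \<forall>b. a \<subseteq> b \<and> b \<subseteq> X \<longrightarrow> b \<in> q)"

lemma filter_onI:
  assumes "q \<subseteq> Pow X" and "X \<in> q" and "{} \<notin> q"
    and "\<And>a b. a \<in> q \<Longrightarrow> b \<in> q \<Longrightarrow> a \<inter> b \<in> q"
    and "\<And>a b. a \<in> q \<Longrightarrow> a \<subseteq> b \<Longrightarrow> b \<subseteq> X \<Longrightarrow> b \<in> q"
  shows "filter_on X q"
  using assms unfolding filter_on_def by blast

lemma
  assumes "filter_on X q"
  shows filter_on_Pow: "q \<subseteq> Pow X" and filter_on_top: "X \<in> q" and filter_on_nonempty: "{} \<notin> q"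
    and filter_on_Int: "\<And>a b. a \<in> q \<Longrightarrow> b \<in> q \<Longrightarrow> a \<inter> b \<in> q"
    and filter_on_mono: "\<And>a b. a \<in> q \<Longrightarrow> a \<subseteq> b \<Longrightarrow> b \<subseteq> X \<Longrightarrow> b \<in> q"
  using assms unfolding filter_on_def by blast+

lemma ultrafilter_on_iff:
  "ultrafilter_on X p \<longleftrightarrow> filter_on X p \<and> (\<forall>A. A \<subseteq> X \<longrightarrow> A \<in> p \<or> X - A \<in> p)"
  unfolding ultrafilter_on_def filter_on_def by meson

lemma ultrafilter_on_filter: "ultrafilter_on X p \<Longrightarrow> filter_on X p"
  unfolding ultrafilter_on_iff by blast

definition generated_filter :: "'a set \<Rightarrow> 'a set set \<Rightarrow> 'a set set" where
  "generated_filter X B = {b. b \<subseteq> X \<and> (\<exists>a\<in>B. a \<subseteq> b)}"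

lemma filter_on_generated:
  assumes B: "B \<subseteq> Pow X" "B \<noteq> {}" "{} \<notin> B"
    and directed: "\<And>a b. a \<in> B \<Longrightarrow> b \<in> B \<Longrightarrow> \<exists>c\<in>B. c \<subseteq> a \<inter> b"
  shows "filter_on X (generated_filter X B)"
proof (rule filter_onI)
  show "a \<inter> b \<in> generated_filter X B"
    if ab: "a \<in> generated_filter X B" "b \<in> generated_filter X B" for a b
  proof -
    obtain a' b' where "a' \<in> B" "a' \<subseteq> a" "b' \<in> B" "b' \<subseteq> b" "a \<subseteq> X"
      using ab unfolding generated_filter_def by blast
    moreover obtain c where "c \<in> B" "c \<subseteq> a' \<inter> b'"
      using directed \<open>a' \<in> B\<close> \<open>b' \<in> B\<close> by blast
    ultimately have "c \<in> B" "c \<subseteq> a \<inter> b" "a \<inter> b \<subseteq> X" by auto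
    then show ?thesis unfolding generated_filter_def by blast
  qed
  show "b \<in> generated_filter X B" if "a \<in> generated_filter X B" "a \<subseteq> b" "b \<subseteq> X" for a b
    using that unfolding generated_filter_def by (blast dest: subset_trans)
qed (use B in \<open>auto simp: generated_filter_def\<close>)

lemma subset_generated_filter: "B \<subseteq> Pow X \<Longrightarrow> B \<subseteq> generated_filter X B"
  unfolding generated_filter_def by blast

lemma filter_on_chain_Union:
  assumes "\<C> \<noteq> {}" and filters: "\<And>q. q \<in> \<C> \<Longrightarrow> filter_on X q"
    and chain: "\<And>q r. q \<in> \<C> \<Longrightarrow> r \<in> \<C> \<Longrightarrow> q \<subseteq> r \<or> r \<subseteq> q"
  shows "filter_on X (\<Union>\<C>)"
proof (rule filter_onI)
  show "a \<inter> b \<in> \<Union>\<C>" if ab: "a \<in> \<Union>\<C>" "b \<in> \<Union>\<C>" for a b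
  proof -
    obtain q r where "q \<in> \<C>" "r \<in> \<C>" "a \<in> q" "b \<in> r" using ab by blast
    moreover have "q \<subseteq> r \<or> r \<subseteq> q" using chain \<open>q \<in> \<C>\<close> \<open>r \<in> \<C>\<close> by blast
    ultimately obtain s where "s \<in> \<C>" "a \<in> s" "b \<in> s" by blast
    then show ?thesis using filters filter_on_Int by blast
  qed
  show "X \<in> \<Union>\<C>" using \<open>\<C> \<noteq> {}\<close> filters filter_on_top by blast
qed (use filters filter_on_Pow filter_on_nonempty filter_on_mono in blast)+

(* A maximal filter decides every subset A of X: if no member misses A, the traces on A
   generate a larger filter containing A. *)
lemma maximal_filter_ultrafilter:
  assumes M: "filter_on X M" and maximal: "\<And>q. filter_on X q \<Longrightarrow> M \<subseteq> q \<Longrightarrow> q = M"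
  shows "ultrafilter_on X M"
  unfolding ultrafilter_on_iff
proof (intro conjI allI impI M)
  fix A assume "A \<subseteq> X"
  show "A \<in> M \<or> X - A \<in> M"
  proof (cases "\<exists>m\<in>M. m \<inter> A = {}")
    case True
    then obtain m where "m \<in> M" "m \<subseteq> X - A" using filter_on_Pow[OF M] by blast
    then show ?thesis using filter_on_mono[OF M] by blast
  next
    case False
    define B where "B = (\<lambda>m. m \<inter> A) ` M"
    have "filter_on X (generated_filter X B)"
    proof (rule filter_on_generated)
      show "B \<subseteq> Pow X" using \<open>A \<subseteq> X\<close> unfolding B_def by blast
      show "B \<noteq> {}" using filter_on_top[OF M] unfolding B_def by blast
      show "{} \<notin> B" using False unfolding B_def by blast
      show "\<exists>c\<in>B. c \<subseteq> a \<inter> b" if ab: "a \<in> B" "b \<in> B" for a b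
      proof -
        obtain m1 m2 where "m1 \<in> M" "m2 \<in> M" "a = m1 \<inter> A" "b = m2 \<inter> A"
          using ab unfolding B_def by blast
        then have "(m1 \<inter> m2) \<inter> A \<in> B" "(m1 \<inter> m2) \<inter> A \<subseteq> a \<inter> b"
          using filter_on_Int[OF M] unfolding B_def by auto
        then show ?thesis by blast
      qed
    qed
    moreover have "M \<subseteq> generated_filter X B"
      using filter_on_Pow[OF M] unfolding B_def generated_filter_def by blast
    moreover have "A \<in> generated_filter X B"
      using filter_on_top[OF M] \<open>A \<subseteq> X\<close> unfolding B_def generated_filter_def by blast
    ultimately show ?thesis using maximal by blast
  qed
qed

lemma ultrafilter_extending_filter:
  assumes "filter_on X F"
  shows "\<exists>p. ultrafilter_on X p \<and> F \<subseteq> p"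
proof -
  define \<Phi> where "\<Phi> = {q. filter_on X q \<and> F \<subseteq> q}"
  have "\<exists>M\<in>\<Phi>. \<forall>q\<in>\<Phi>. M \<subseteq> q \<longrightarrow> q = M"
  proof (rule subset_Zorn_nonempty)
    show "\<Phi> \<noteq> {}" using assms unfolding \<Phi>_def by blast
    show "\<Union>\<C> \<in> \<Phi>" if "\<C> \<noteq> {}" "subset.chain \<Phi> \<C>" for \<C>
    proof -
      have "filter_on X (\<Union>\<C>)"
        using that filter_on_chain_Union[of \<C> X] unfolding \<Phi>_def subset_chain_def by blast
      moreover have "F \<subseteq> \<Union>\<C>" using that unfolding \<Phi>_def subset_chain_def by blast
      ultimately show ?thesis unfolding \<Phi>_def by blast
    qed
  qed
  then obtain M where M: "filter_on X M" "F \<subseteq> M" and maximal: "\<forall>q\<in>\<Phi>. M \<subseteq> q \<longrightarrow> q = M"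
    unfolding \<Phi>_def by blast
  have "ultrafilter_on X M"
  proof (rule maximal_filter_ultrafilter[OF M(1)])
    show "q = M" if "filter_on X q" "M \<subseteq> q" for q
      using maximal that M(2) unfolding \<Phi>_def by blast
  qed
  then show ?thesis using M(2) by blast
qed

(* Let S be a family closed under finite unions, each of whose members meets every A n in a
   finite set.  Then some ultrafilter contains all tail unions of (A n) and all complements of
   members of S: the sets T n - s form a filter base because A n - s is infinite. *)
lemma ultrafilter_through_tails:
  fixes A :: "nat \<Rightarrow> 'a set" and S :: "'a set set"
  assumes AX: "\<And>n. A n \<subseteq> X" and A_inf: "\<And>n. infinite (A n)"
    and S_empty: "{} \<in> S"
    and S_Un: "\<And>s t. s \<in> S \<Longrightarrow> t \<in> S \<Longrightarrow> s \<union> t \<in> S"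
    and A_S: "\<And>n s. s \<in> S \<Longrightarrow> finite (A n \<inter> s)"
  shows "\<exists>p. ultrafilter_on X p \<and> (\<forall>n. (\<Union>i\<in>{n..}. A i) \<in> p) \<and> (\<forall>s\<in>S. X - s \<in> p)"
proof -
  define T where "T n = (\<Union>i\<in>{n..}. A i)" for n
  have TX: "T n \<subseteq> X" for n using AX unfolding T_def by blast
  have T_anti: "m \<le> n \<Longrightarrow> T n \<subseteq> T m" for m n unfolding T_def by (rule UN_mono) auto
  define B where "B = {T n - s | n s. s \<in> S}"
  have BX: "B \<subseteq> Pow X" unfolding B_def using TX by blast
  have "filter_on X (generated_filter X B)"
  proof (rule filter_on_generated[OF BX])
    show "B \<noteq> {}" unfolding B_def using S_empty by blast
    show "{} \<notin> B"
    proof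
      assume "{} \<in> B"
      then obtain n s where "s \<in> S" "T n - s = {}" unfolding B_def by blast
      then have "A n \<subseteq> A n \<inter> s" unfolding T_def by blast
      then show False using A_S[OF \<open>s \<in> S\<close>] A_inf finite_subset by metis
    qed
    show "\<exists>c\<in>B. c \<subseteq> a \<inter> b" if ab: "a \<in> B" "b \<in> B" for a b
    proof -
      obtain n s m t where "s \<in> S" "t \<in> S" "a = T n - s" "b = T m - t"
        using ab unfolding B_def by blast
      moreover have "T (max n m) \<subseteq> T n" "T (max n m) \<subseteq> T m" using T_anti by simp_all
      moreover have "T (max n m) - (s \<union> t) \<in> B"
        unfolding B_def using S_Un[OF \<open>s \<in> S\<close> \<open>t \<in> S\<close>] by blast
      ultimately have "T (max n m) - (s \<union> t) \<in> B" "T (max n m) - (s \<union> t) \<subseteq> a \<inter> b"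
        by auto
      then show ?thesis by blast
    qed
  qed
  then obtain p where p: "ultrafilter_on X p" and "generated_filter X B \<subseteq> p"
    using ultrafilter_extending_filter by blast
  then have Bp: "B \<subseteq> p" using subset_generated_filter[OF BX] by blast
  have "T n \<in> p" for n
  proof -
    have "T n - {} \<in> B" unfolding B_def using S_empty by blast
    then show ?thesis using Bp by auto
  qed
  moreover have "X - s \<in> p" if "s \<in> S" for s
  proof -
    have "T 0 - s \<in> p" using Bp that unfolding B_def by blast
    moreover have "T 0 - s \<subseteq> X - s" using TX by blast
    ultimately show ?thesis using filter_on_mono[OF ultrafilter_on_filter[OF p]] by blast
  qed
  ultimately show ?thesis using p unfolding T_def by blast
qed

lemma ultrafilter_member_infinite:
  assumes p: "ultrafilter_on X p" and free: "\<And>F. finite F \<Longrightarrow> F \<subseteq> X \<Longrightarrow> X - F \<in> p"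
    and "P \<in> p"
  shows "infinite P"
proof
  assume "finite P"
  have pF: "filter_on X p" using p by (rule ultrafilter_on_filter)
  have "P \<subseteq> X" using filter_on_Pow[OF pF] \<open>P \<in> p\<close> by blast
  then have "P \<inter> (X - P) \<in> p" using free \<open>finite P\<close> \<open>P \<in> p\<close> filter_on_Int[OF pF] by blast
  then show False using filter_on_nonempty[OF pF] by simp
qed

lemma filter_on_Inter_atMost:
  fixes Q :: "nat \<Rightarrow> 'a set" and k :: nat
  assumes "filter_on X p" and "\<And>j. Q j \<in> p"
  shows "(\<Inter>j\<le>k. Q j) \<in> p"
proof (induction k)
  case 0
  then show ?case using assms(2) by simp
next
  case (Suc k)
  have "(\<Inter>j\<le>Suc k. Q j) = (\<Inter>j\<le>k. Q j) \<inter> Q (Suc k)" by (auto simp: atMost_Suc)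
  then show ?case using Suc filter_on_Int[OF assms(1)] assms(2) by metis
qed

(* On a countable set, countably many members of a free ultrafilter have an infinite
   pseudo-intersection: pick x k in Q 0 \<inter> ... \<inter> Q k with code f (x k) >= k, so that the
   range of x is infinite and almost contained in each Q n. *)
lemma countable_pseudo_intersection:
  fixes X :: "'a set" and Q :: "nat \<Rightarrow> 'a set"
  assumes "countable X" and p: "ultrafilter_on X p" and p_inf: "\<And>P. P \<in> p \<Longrightarrow> infinite P"
    and Q: "\<And>n. Q n \<in> p"
  shows "\<exists>C. C \<subseteq> X \<and> infinite C \<and> (\<forall>n. finite (C - Q n))"
proof -
  obtain f :: "'a \<Rightarrow> nat" where f: "inj_on f X" using \<open>countable X\<close> by (meson countable_def)
  have pF: "filter_on X p" using p by (rule ultrafilter_on_filter)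
  define E where "E k = (\<Inter>j\<le>k. Q j)" for k
  have E: "E k \<in> p" for k unfolding E_def using filter_on_Inter_atMost[OF pF Q] .
  have EX: "E k \<subseteq> X" for k using E filter_on_Pow[OF pF] by blast
  \<comment> \<open>Since E k is infinite and f is injective on it, f is unbounded on E k.\<close>
  have "\<exists>y\<in>E k. k \<le> f y" for k
  proof (rule ccontr)
    assume "\<not> (\<exists>y\<in>E k. k \<le> f y)"
    then have "f ` E k \<subseteq> {..<k}" by auto
    then have "finite (f ` E k)" by (rule finite_subset) simp
    moreover have "inj_on f (E k)" using f EX by (rule inj_on_subset)
    ultimately have "finite (E k)" by (rule finite_imageD)
    then show False using p_inf E by blast
  qed
  then obtain x where x_E: "\<And>k. x k \<in> E k" and x_f: "\<And>k. k \<le> f (x k)" by metis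
  define C where "C = range x"
  have "C - Q n \<subseteq> x ` {..<n}" for n
  proof
    fix y assume "y \<in> C - Q n"
    then obtain k where "y = x k" "x k \<notin> Q n" unfolding C_def by blast
    moreover have "n \<le> k \<Longrightarrow> x k \<in> Q n" using x_E[of k] unfolding E_def by blast
    ultimately have "k < n" using not_le by blast
    then show "y \<in> x ` {..<n}" using \<open>y = x k\<close> by blast
  qed
  then have "finite (C - Q n)" for n by (rule finite_subset) simp
  moreover have "infinite C"
  proof
    assume "finite C"
    then obtain m where "\<forall>k. f (x k) \<le> m"
      unfolding C_def using finite_nat_set_iff_bounded_le[of "f ` range x"] by blast
    then show False using x_f[of "Suc m"] by (metis not_less_eq_eq)
  qed
  moreover have "C \<subseteq> X" unfolding C_def using x_E EX by blast
  ultimately show ?thesis by blast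
qed

lemma bisequential_sequence:
  fixes X :: "'a set"
  assumes "bisequential X \<I>" and "ultrafilter_on X p"
    and I: "\<And>L. L \<in> \<I> \<Longrightarrow> L \<subseteq> X \<and> X - L \<in> p"
  shows "\<exists>P :: nat \<Rightarrow> 'a set. (\<forall>n. P n \<in> p) \<and> (\<forall>L\<in>\<I>. \<exists>n. finite (L \<inter> P n))"
proof -
  have "\<I> \<subseteq> dual_ideal X p"
  proof
    fix L assume "L \<in> \<I>"
    then have "L \<subseteq> X" "X - L \<in> p" using I by auto
    then show "L \<in> dual_ideal X p"
      unfolding dual_ideal_def by (intro CollectI exI[of _ "X - L"]) (simp add: double_diff)
  qed
  then obtain B :: "nat \<Rightarrow> 'a set"
    where B: "\<And>n. B n \<in> dual_ideal X p" and small: "\<forall>L\<in>\<I>. \<exists>n. finite (L - B n)"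
    using assms(1,2) unfolding bisequential_def by blast
  have "\<forall>n. \<exists>P. P \<in> p \<and> B n = X - P" using B unfolding dual_ideal_def by blast
  then obtain P :: "nat \<Rightarrow> 'a set" where P: "\<And>n. P n \<in> p" and BP: "\<And>n. B n = X - P n"
    by metis
  have "\<exists>n. finite (L \<inter> P n)" if "L \<in> \<I>" for L
  proof -
    obtain n where "finite (L - B n)" using small \<open>L \<in> \<I>\<close> by blast
    moreover have "L - B n = L \<inter> P n" using I[OF \<open>L \<in> \<I>\<close>] BP by blast
    ultimately show ?thesis by auto
  qed
  then show ?thesis using P by blast
qed

(* Subsets of X almost disjoint from every member of \<A>: perp X \<A> together with the finite
   subsets of X.  It is closed under unions, which makes it usable in the tail construction. *)
definition orth_sets :: "'a set \<Rightarrow> 'a set set \<Rightarrow> 'a set set" where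
  "orth_sets X \<A> = {s. s \<subseteq> X \<and> (\<forall>B\<in>\<A>. finite (s \<inter> B))}"

lemma orth_sets_Un: "s \<in> orth_sets X \<A> \<Longrightarrow> t \<in> orth_sets X \<A> \<Longrightarrow> s \<union> t \<in> orth_sets X \<A>"
  unfolding orth_sets_def by (auto simp: Int_Un_distrib2)

lemma finite_in_orth_sets: "finite F \<Longrightarrow> F \<subseteq> X \<Longrightarrow> F \<in> orth_sets X \<A>"
  unfolding orth_sets_def by simp

lemma bisequential_tail_pseudo_intersection:
  fixes X :: "'a set" and A :: "nat \<Rightarrow> 'a set"
  assumes "countable X" and "\<A> \<subseteq> Pinf X" and A: "\<And>n. A n \<in> \<A>"
    and "bisequential X \<I>" and I: "\<I> \<subseteq> orth_sets X \<A>"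
  shows "\<exists>C\<in>Pinf X. (\<forall>n. finite (C - (\<Union>i\<in>{n..}. A i))) \<and> (\<forall>L\<in>\<I>. finite (C \<inter> L))"
proof -
  define T where "T n = (\<Union>i\<in>{n..}. A i)" for n
  have "\<exists>p. ultrafilter_on X p \<and> (\<forall>n. T n \<in> p) \<and> (\<forall>s\<in>orth_sets X \<A>. X - s \<in> p)"
    unfolding T_def
  proof (rule ultrafilter_through_tails)
    show "A n \<subseteq> X" "infinite (A n)" for n using A \<open>\<A> \<subseteq> Pinf X\<close> unfolding Pinf_def by auto
    show "{} \<in> orth_sets X \<A>" unfolding orth_sets_def by simp
    show "finite (A n \<inter> s)" if "s \<in> orth_sets X \<A>" for n s
      using that A unfolding orth_sets_def by (auto simp: Int_commute)
  qed (rule orth_sets_Un)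
  then obtain p where p: "ultrafilter_on X p" and T: "\<And>n. T n \<in> p"
    and orth: "\<And>s. s \<in> orth_sets X \<A> \<Longrightarrow> X - s \<in> p"
    by blast
  have p_inf: "infinite P" if "P \<in> p" for P
    using ultrafilter_member_infinite[OF p] orth finite_in_orth_sets that by blast
  have "L \<subseteq> X \<and> X - L \<in> p" if "L \<in> \<I>" for L
  proof -
    have "L \<in> orth_sets X \<A>" using I that by blast
    then show ?thesis using orth unfolding orth_sets_def by blast
  qed
  from bisequential_sequence[OF \<open>bisequential X \<I>\<close> p this]
  obtain P :: "nat \<Rightarrow> 'a set" where P: "\<And>n. P n \<in> p" and I_P: "\<forall>L\<in>\<I>. \<exists>n. finite (L \<inter> P n)"
    by blast
  have "T n \<inter> P n \<in> p" for n using filter_on_Int[OF ultrafilter_on_filter[OF p]] T P by blast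
  then obtain C where "C \<subseteq> X" "infinite C" and C: "\<And>n. finite (C - (T n \<inter> P n))"
    using countable_pseudo_intersection[OF \<open>countable X\<close> p p_inf, of "\<lambda>n. T n \<inter> P n"]
    by blast
  have "finite (C - T n)" for n using C[of n] by (rule finite_subset[rotated]) blast
  moreover have "finite (C \<inter> L)" if "L \<in> \<I>" for L
  proof -
    obtain n where "finite (L \<inter> P n)" using I_P \<open>L \<in> \<I>\<close> by blast
    then have "finite ((C - (T n \<inter> P n)) \<union> (L \<inter> P n))" using C by blast
    then show ?thesis by (rule finite_subset[rotated]) blast
  qed
  ultimately show ?thesis using \<open>C \<subseteq> X\<close> \<open>infinite C\<close> unfolding Pinf_def T_def by blast
qed

lemma hereditary_perp: "hereditary X (perp X \<I>)"
  unfolding hereditary_def perp_def Pinf_def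
  by (auto intro: finite_subset[of "_ \<inter> _" "_ \<inter> _"])

lemma perp_subset_orth_sets: "perp X \<A> \<subseteq> orth_sets X \<A>"
  unfolding perp_def orth_sets_def Pinf_def by blast

lemma subset_orth_sets_perp: "\<I> \<subseteq> Pinf X \<Longrightarrow> \<I> \<subseteq> orth_sets X (perp X \<I>)"
  unfolding perp_def orth_sets_def Pinf_def by (auto simp: Int_commute)

lemma M_family_if_perp_bisequential:
  fixes X :: "'a set"
  assumes "countable X" and her: "hereditary X \<A>" and bis: "bisequential X (perp X \<A>)"
  shows "M_family X \<A>"
proof -
  have "\<exists>A\<in>\<A>. \<forall>n. finite (A - (\<Union>i\<in>{n..}. An i))"
    if An: "\<And>n. An n \<in> \<A>" for An :: "nat \<Rightarrow> 'a set"
  proof -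
    have "\<A> \<subseteq> Pinf X" using her unfolding hereditary_def by blast
    from bisequential_tail_pseudo_intersection
        [where A = An, OF \<open>countable X\<close> this An bis perp_subset_orth_sets]
    obtain C where C: "C \<in> Pinf X" and tails: "\<And>n. finite (C - (\<Union>i\<in>{n..}. An i))"
      and C_perp: "\<forall>L\<in>perp X \<A>. finite (C \<inter> L)"
      by blast
    \<comment> \<open>C is infinite, so it is not almost disjoint from itself and thus meets some member
        of the family in an infinite set.\<close>
    have "C \<notin> perp X \<A>" using C_perp C unfolding Pinf_def by auto
    then obtain A' where "A' \<in> \<A>" "infinite (C \<inter> A')" using C unfolding perp_def by blast
    then have "C \<inter> A' \<in> \<A>" using her unfolding hereditary_def by blast
    moreover have "finite (C \<inter> A' - (\<Union>i\<in>{n..}. An i))" for n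
      using tails[of n] by (rule finite_subset[rotated]) blast
    ultimately show ?thesis by blast
  qed
  then show ?thesis using her unfolding M_family_def by blast
qed

(* Part (ii); only \<I> \<subseteq> Pinf X is needed, not closure of \<I> under unions. *)
lemma M_family_perp_if_bisequential:
  fixes X :: "'a set"
  assumes "countable X" and "\<I> \<subseteq> Pinf X" and bis: "bisequential X \<I>"
  shows "M_family X (perp X \<I>)"
proof -
  have "\<exists>B\<in>perp X \<I>. \<forall>n. finite (B - (\<Union>i\<in>{n..}. An i))"
    if An: "\<And>n. An n \<in> perp X \<I>" for An :: "nat \<Rightarrow> 'a set"
  proof -
    have "perp X \<I> \<subseteq> Pinf X" unfolding perp_def by blast
    from bisequential_tail_pseudo_intersection[where A = An, OF \<open>countable X\<close> this An bis
        subset_orth_sets_perp[OF \<open>\<I> \<subseteq> Pinf X\<close>]]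
    obtain C where "C \<in> Pinf X" "\<And>n. finite (C - (\<Union>i\<in>{n..}. An i))"
      and "\<forall>L\<in>\<I>. finite (C \<inter> L)"
      by blast
    then show ?thesis unfolding perp_def by blast
  qed
  then show ?thesis using hereditary_perp unfolding M_family_def by blast
qed

theorem proposition6:
  fixes X :: "'a set"
  assumes "countable X"
  shows "(\<forall>\<A>. hereditary X \<A> \<and> bisequential X (perp X \<A>) \<longrightarrow> M_family X \<A>)
       \<and> (\<forall>\<I>. ideal_on X \<I> \<and> bisequential X \<I> \<longrightarrow> M_family X (perp X \<I>))"
proof (intro conjI allI impI)
  fix \<A> assume "hereditary X \<A> \<and> bisequential X (perp X \<A>)"
  then show "M_family X \<A>" using M_family_if_perp_bisequential[OF assms] by blast
next
  fix \<I> assume "ideal_on X \<I> \<and> bisequential X \<I>"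
  then have "\<I> \<subseteq> Pinf X" and "bisequential X \<I>" unfolding ideal_on_def hereditary_def by blast+
  then show "M_family X (perp X \<I>)" by (rule M_family_perp_if_bisequential[OF assms])
qed

end
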